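(* Let $T\subseteq\mathcal T_d$ be any subregion and let $U$ be the monomial subregion of $T$ associated to a monomial $x^ay^bz^c$ of degree less than $d$. If $U$ is tileable by lozenges, then $T$ is tileable if and only if $T\setminus U$ is tileable. Moreover, each lozenge tiling of $T$ is obtained by combining a lozenge tiling of $T\setminus U$ and a lozenge tiling of $U$.
   Context: For $d\ge1$, $\mathcal T_d$ is an equilateral triangle of side length $d$ (horizontal bottom side) subdivided into unit triangles, upward ones labeled by the degree $d-1$ monomials of $K[x,y,z]$ and downward ones by degree $d-2$ monomials: $x^{d-1}$ at the top, $y^{d-1}$ bottom-left, $z^{d-1}$ bottom-right, and an upward triangle sharing an edge with a downward one has label equal to the downward label times a variable. A subregion is a set of these unit triangles. The monomial subregion of $T$ associated to a monomial $m$ of degree $<d$ is the set of unit triangles of $T$ whose labels are divisible by $m$ (i.e., the part of $T$ inside the upward triangle located $a$ units from the bottom edge, $b$ from the upper-right edge and $c$ from the upper-left edge when $m=x^ay^bz^c$). A lozenge is a union of two unit triangles sharing an edge; a region is tileable if it is empty or some set of lozenges covers each of its unit triangles exactly once. *)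

theory Defs
  imports Main
begin

text \<open>Unit triangles of T_d, identified by their labels: a monomial x^a y^b z^c is
  represented by its exponent triple (a,b,c).\<close>

datatype utri = Up "nat \<times> nat \<times> nat" | Down "nat \<times> nat \<times> nat"

fun deg :: "nat \<times> nat \<times> nat \<Rightarrow> nat" where
  "deg (a, b, c) = a + b + c"

definition tri_region :: "nat \<Rightarrow> utri set" where
  "tri_region d = {Up m | m. deg m + 1 = d} \<union> {Down m | m. deg m + 2 = d}"

fun label :: "utri \<Rightarrow> nat \<times> nat \<times> nat" where
  "label (Up m) = m"
| "label (Down m) = m"

fun mdvd :: "nat \<times> nat \<times> nat \<Rightarrow> nat \<times> nat \<times> nat \<Rightarrow> bool" where
  "mdvd (a, b, c) (a', b', c') \<longleftrightarrow> a \<le> a' \<and> b \<le> b' \<and> c \<le> c'"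

text \<open>An upward triangle and a downward triangle share an edge iff the upward label
  equals the downward label times a variable.\<close>
definition adjacent :: "nat \<times> nat \<times> nat \<Rightarrow> nat \<times> nat \<times> nat \<Rightarrow> bool" where
  "adjacent u v \<longleftrightarrow> u = (case v of (a, b, c) \<Rightarrow> (Suc a, b, c))
                 \<or> u = (case v of (a, b, c) \<Rightarrow> (a, Suc b, c))
                 \<or> u = (case v of (a, b, c) \<Rightarrow> (a, b, Suc c))"

definition lozenge :: "utri set \<Rightarrow> bool" where
  "lozenge L \<longleftrightarrow> (\<exists>u v. adjacent u v \<and> L = {Up u, Down v})"

definition tiling_of :: "utri set set \<Rightarrow> utri set \<Rightarrow> bool" where
  "tiling_of \<tau> R \<longleftrightarrow> (\<forall>L\<in>\<tau>. lozenge L \<and> L \<subseteq> R)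
      \<and> (\<forall>t\<in>R. \<exists>!L. L \<in> \<tau> \<and> t \<in> L)"

definition tileable :: "utri set \<Rightarrow> bool" where
  "tileable R \<longleftrightarrow> R = {} \<or> (\<exists>\<tau>. tiling_of \<tau> R)"

definition monomial_subregion :: "utri set \<Rightarrow> nat \<times> nat \<times> nat \<Rightarrow> utri set" where
  "monomial_subregion T m = {t \<in> T. mdvd m (label t)}"

end

theory Submission
  imports Defs
begin

text \<open>In a lozenge the downward label divides the upward one, so a lozenge of T whose
  downward triangle lies in the monomial subregion U lies entirely in U. Hence any tiling of T
  matches the downward triangles of U injectively with upward triangles of U. Since U is
  tileable, it has as many upward as downward triangles, so this matching exhausts the upward
  triangles of U as well, and no lozenge crosses the boundary of U.\<close>

lemma tileable_iff_tiling: "tileable R \<longleftrightarrow> (\<exists>\<tau>. tiling_of \<tau> R)"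
proof -
  have "tiling_of {} {}" unfolding tiling_of_def by simp
  then show ?thesis unfolding tileable_def by blast
qed

lemma finite_tri_region: "finite (tri_region d)"
proof (rule finite_subset)
  show "tri_region d \<subseteq> Up ` ({..d} \<times> {..d} \<times> {..d}) \<union> Down ` ({..d} \<times> {..d} \<times> {..d})"
    unfolding tri_region_def by auto
qed simp

lemma lozenge_ex1_Up: "lozenge L \<Longrightarrow> \<exists>!t. t \<in> L \<and> t \<in> range Up"
  unfolding lozenge_def by auto

lemma lozenge_ex1_Down: "lozenge L \<Longrightarrow> \<exists>!t. t \<in> L \<and> t \<in> range Down"
  unfolding lozenge_def by auto

lemma tiling_ofI:
  assumes "\<And>L. L \<in> \<tau> \<Longrightarrow> lozenge L" and "\<And>L. L \<in> \<tau> \<Longrightarrow> L \<subseteq> R"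
    and "\<And>t. t \<in> R \<Longrightarrow> \<exists>!L. L \<in> \<tau> \<and> t \<in> L"
  shows "tiling_of \<tau> R"
  using assms unfolding tiling_of_def by simp

lemma tiling_of_lozenge: "tiling_of \<tau> R \<Longrightarrow> L \<in> \<tau> \<Longrightarrow> lozenge L"
  unfolding tiling_of_def by simp

lemma tiling_of_subset: "tiling_of \<tau> R \<Longrightarrow> L \<in> \<tau> \<Longrightarrow> L \<subseteq> R"
  unfolding tiling_of_def by simp

lemma tiling_of_ex1: "tiling_of \<tau> R \<Longrightarrow> t \<in> R \<Longrightarrow> \<exists>!L. L \<in> \<tau> \<and> t \<in> L"
  unfolding tiling_of_def by simp

definition tile_at :: "utri set set \<Rightarrow> utri \<Rightarrow> utri set" where
  "tile_at \<tau> t = (THE L. L \<in> \<tau> \<and> t \<in> L)"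

lemma tile_at_mem:
  assumes "tiling_of \<tau> R" and "t \<in> R"
  shows "tile_at \<tau> t \<in> \<tau>" and "t \<in> tile_at \<tau> t"
proof -
  have "tile_at \<tau> t \<in> \<tau> \<and> t \<in> tile_at \<tau> t"
    unfolding tile_at_def using tiling_of_ex1[OF assms] by (rule theI')
  then show "tile_at \<tau> t \<in> \<tau>" and "t \<in> tile_at \<tau> t" by simp_all
qed

lemma tile_at_eq:
  assumes \<tau>: "tiling_of \<tau> R" and L: "L \<in> \<tau>" "t \<in> L"
  shows "tile_at \<tau> t = L"
proof -
  have "t \<in> R" using tiling_of_subset[OF \<tau> L(1)] L(2) by blast
  show ?thesis
    unfolding tile_at_def using tiling_of_ex1[OF \<tau> \<open>t \<in> R\<close>] by (rule the1_equality) (simp add: L)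
qed

lemma tiling_of_Un:
  assumes \<tau>1: "tiling_of \<tau>1 R1" and \<tau>2: "tiling_of \<tau>2 R2" and disj: "R1 \<inter> R2 = {}"
  shows "tiling_of (\<tau>1 \<union> \<tau>2) (R1 \<union> R2)"
proof (rule tiling_ofI)
  fix L assume "L \<in> \<tau>1 \<union> \<tau>2"
  then show "lozenge L" and "L \<subseteq> R1 \<union> R2"
    using tiling_of_lozenge[OF \<tau>1] tiling_of_lozenge[OF \<tau>2]
      tiling_of_subset[OF \<tau>1] tiling_of_subset[OF \<tau>2] by blast+
next
  have unique_in: "\<exists>!L. L \<in> \<tau> \<union> \<tau>' \<and> t \<in> L"
    if \<tau>: "tiling_of \<tau> R" "t \<in> R" and \<tau>': "tiling_of \<tau>' R'" "t \<notin> R'" for t \<tau> R \<tau>' R'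
  proof (rule ex1I[of _ "tile_at \<tau> t"])
    show "tile_at \<tau> t \<in> \<tau> \<union> \<tau>' \<and> t \<in> tile_at \<tau> t" using tile_at_mem[OF \<tau>] by simp
  next
    fix L assume L: "L \<in> \<tau> \<union> \<tau>' \<and> t \<in> L"
    have "L \<notin> \<tau>'" using L tiling_of_subset[OF \<tau>'(1)] \<tau>'(2) by blast
    with L have "L \<in> \<tau>" by blast
    then show "L = tile_at \<tau> t" using L tile_at_eq[OF \<tau>(1)] by metis
  qed
  fix t assume "t \<in> R1 \<union> R2"
  then consider "t \<in> R1" "t \<notin> R2" | "t \<in> R2" "t \<notin> R1" using disj by blast
  then show "\<exists>!L. L \<in> \<tau>1 \<union> \<tau>2 \<and> t \<in> L"
  proof cases
    case 1
    then show ?thesis using unique_in[OF \<tau>1 _ \<tau>2] by simp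
  next
    case 2
    then show ?thesis using unique_in[OF \<tau>2 _ \<tau>1] by (simp add: Un_commute)
  qed
qed

lemma tiling_of_restrict:
  assumes \<tau>: "tiling_of \<tau> R" and sep: "\<forall>L\<in>\<tau>. L \<subseteq> S \<or> L \<inter> S = {}"
  shows "tiling_of {L \<in> \<tau>. L \<subseteq> S} (R \<inter> S)"
proof (rule tiling_ofI)
  fix L assume "L \<in> {L \<in> \<tau>. L \<subseteq> S}"
  then show "lozenge L" and "L \<subseteq> R \<inter> S"
    using tiling_of_lozenge[OF \<tau>] tiling_of_subset[OF \<tau>] by auto
next
  fix t assume t: "t \<in> R \<inter> S"
  show "\<exists>!L. L \<in> {L \<in> \<tau>. L \<subseteq> S} \<and> t \<in> L"
  proof (rule ex1I[of _ "tile_at \<tau> t"])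
    have "tile_at \<tau> t \<in> \<tau>" "t \<in> tile_at \<tau> t" using tile_at_mem[OF \<tau>] t by auto
    moreover then have "tile_at \<tau> t \<subseteq> S" using sep t by blast
    ultimately show "tile_at \<tau> t \<in> {L \<in> \<tau>. L \<subseteq> S} \<and> t \<in> tile_at \<tau> t" by simp
  next
    fix L assume "L \<in> {L \<in> \<tau>. L \<subseteq> S} \<and> t \<in> L"
    then show "L = tile_at \<tau> t" using tile_at_eq[OF \<tau>] by blast
  qed
qed

lemma bij_betw_tile_at:
  assumes \<tau>: "tiling_of \<tau> R" and one: "\<And>L. lozenge L \<Longrightarrow> \<exists>!t. t \<in> L \<and> t \<in> K"
  shows "bij_betw (tile_at \<tau>) (R \<inter> K) \<tau>"
proof (rule bij_betwI')
  fix s t assume s: "s \<in> R \<inter> K" and t: "t \<in> R \<inter> K"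
  show "tile_at \<tau> s = tile_at \<tau> t \<longleftrightarrow> s = t"
  proof
    assume eq: "tile_at \<tau> s = tile_at \<tau> t"
    have L: "tile_at \<tau> s \<in> \<tau>" and "s \<in> tile_at \<tau> s" "t \<in> tile_at \<tau> s"
      using tile_at_mem[OF \<tau>] s t eq by auto
    with one[OF tiling_of_lozenge[OF \<tau> L]] s t show "s = t" by (metis IntD2)
  qed simp
next
  fix s assume "s \<in> R \<inter> K"
  then show "tile_at \<tau> s \<in> \<tau>" using tile_at_mem[OF \<tau>] by blast
next
  fix L assume L: "L \<in> \<tau>"
  obtain t where "t \<in> L" "t \<in> K" using one[OF tiling_of_lozenge[OF \<tau> L]] by blast
  moreover have "t \<in> R" using tiling_of_subset[OF \<tau> L] \<open>t \<in> L\<close> by blast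
  ultimately show "\<exists>t\<in>R \<inter> K. L = tile_at \<tau> t" using tile_at_eq[OF \<tau> L] by blast
qed

lemma tiling_balanced:
  assumes "tiling_of \<tau> R"
  shows "card (R \<inter> range Up) = card (R \<inter> range Down)"
  using bij_betw_same_card[OF bij_betw_tile_at[OF assms lozenge_ex1_Up]]
    bij_betw_same_card[OF bij_betw_tile_at[OF assms lozenge_ex1_Down]] by simp

definition down_closed_in :: "utri set \<Rightarrow> utri set \<Rightarrow> bool" where
  "down_closed_in U R \<longleftrightarrow> (\<forall>u v. adjacent u v \<longrightarrow> Down v \<in> U \<longrightarrow> Up u \<in> R \<longrightarrow> Up u \<in> U)"

lemma monomial_subregion_down_closed: "down_closed_in (monomial_subregion T m) T"
proof -
  have "mdvd m u" if "adjacent u v" "mdvd m v" for u v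
    using that unfolding adjacent_def by (cases m; cases v; auto)
  then show ?thesis
    unfolding down_closed_in_def monomial_subregion_def by auto
qed

lemma tiles_inside_or_outside:
  assumes \<tau>: "tiling_of \<tau> R" and UR: "U \<subseteq> R" and fin: "finite U"
    and closed: "down_closed_in U R"
    and balanced: "card (U \<inter> range Up) = card (U \<inter> range Down)"
  shows "\<forall>L\<in>\<tau>. L \<subseteq> U \<or> L \<inter> U = {}"
proof
  have lozenge_parts: "\<exists>u v. adjacent u v \<and> L = {Up u, Down v} \<and> Up u \<in> R" if "L \<in> \<tau>" for L
    using tiling_of_lozenge[OF \<tau> that] tiling_of_subset[OF \<tau> that] unfolding lozenge_def by blast
  have inj: "inj_on (tile_at \<tau>) (U \<inter> K)" if "\<And>L. lozenge L \<Longrightarrow> \<exists>!t. t \<in> L \<and> t \<in> K" for K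
    using bij_betw_tile_at[OF \<tau> that] UR inj_on_subset unfolding bij_betw_def
    by (metis Int_mono order_refl)
  have Down_matched: "tile_at \<tau> ` (U \<inter> range Down) \<subseteq> tile_at \<tau> ` (U \<inter> range Up)"
  proof
    fix L assume "L \<in> tile_at \<tau> ` (U \<inter> range Down)"
    then obtain w where w: "Down w \<in> U" and Lw: "L = tile_at \<tau> (Down w)" by auto
    then have L: "L \<in> \<tau>" "Down w \<in> L" using tile_at_mem[OF \<tau>] UR by auto
    then obtain u v where uv: "adjacent u v" "L = {Up u, Down v}" "Up u \<in> R"
      using lozenge_parts by blast
    with L w have "Up u \<in> U" using closed unfolding down_closed_in_def by blast
    moreover have "tile_at \<tau> (Up u) = L" using tile_at_eq[OF \<tau> L(1)] uv by simp
    ultimately show "L \<in> tile_at \<tau> ` (U \<inter> range Up)" by blast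
  qed
  have matched: "tile_at \<tau> ` (U \<inter> range Up) \<subseteq> tile_at \<tau> ` (U \<inter> range Down)"
    using card_subset_eq[OF _ Down_matched] fin balanced
      card_image[OF inj[OF lozenge_ex1_Up]] card_image[OF inj[OF lozenge_ex1_Down]] by simp
  fix L assume L: "L \<in> \<tau>"
  then obtain u v where uv: "adjacent u v" "L = {Up u, Down v}" "Up u \<in> R"
    using lozenge_parts by blast
  have "Down v \<in> U" if "Up u \<in> U"
  proof -
    have "tile_at \<tau> (Up u) \<in> tile_at \<tau> ` (U \<inter> range Down)" using that matched by blast
    then obtain w where w: "Down w \<in> U" "tile_at \<tau> (Up u) = tile_at \<tau> (Down w)" by blast
    then have "Down w \<in> L"
      using tile_at_mem(2)[OF \<tau>, of "Down w"] tile_at_eq[OF \<tau> L, of "Up u"] UR uv(2) by auto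
    then show ?thesis using w uv(2) by simp
  qed
  moreover have "Up u \<in> U" if "Down v \<in> U"
    using closed that uv unfolding down_closed_in_def by blast
  ultimately show "L \<subseteq> U \<or> L \<inter> U = {}" using uv(2) by blast
qed

theorem lemma2p1:
  fixes d a b c :: nat and T :: "utri set"
  assumes "d \<ge> 1"
    and "T \<subseteq> tri_region d"
    and "a + b + c < d"
    and "tileable (monomial_subregion T (a, b, c))"
  shows "(tileable T \<longleftrightarrow> tileable (T - monomial_subregion T (a, b, c)))
       \<and> (\<forall>\<tau>. tiling_of \<tau> T \<longrightarrow>
            (\<exists>\<tau>1 \<tau>2. tiling_of \<tau>1 (T - monomial_subregion T (a, b, c))
                   \<and> tiling_of \<tau>2 (monomial_subregion T (a, b, c))
                   \<and> \<tau> = \<tau>1 \<union> \<tau>2))"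
proof -
  define U where "U = monomial_subregion T (a, b, c)"
  have UT: "U \<subseteq> T" unfolding U_def monomial_subregion_def by blast
  have fin: "finite U" using assms(2) UT finite_tri_region finite_subset by metis
  obtain \<sigma> where \<sigma>: "tiling_of \<sigma> U" using assms(4) tileable_iff_tiling U_def by blast
  have split: "\<exists>\<tau>1 \<tau>2. tiling_of \<tau>1 (T - U) \<and> tiling_of \<tau>2 U \<and> \<tau> = \<tau>1 \<union> \<tau>2"
    if \<tau>: "tiling_of \<tau> T" for \<tau>
  proof -
    have sep: "\<forall>L\<in>\<tau>. L \<subseteq> U \<or> L \<inter> U = {}"
      using tiles_inside_or_outside[OF \<tau> UT fin _ tiling_balanced[OF \<sigma>]]
        monomial_subregion_down_closed U_def by blast
    then have "\<forall>L\<in>\<tau>. L \<subseteq> - U \<or> L \<inter> - U = {}" by blast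
    then have "tiling_of {L \<in> \<tau>. L \<subseteq> - U} (T - U)"
      using tiling_of_restrict[OF \<tau>] by (simp add: Diff_eq)
    moreover have "tiling_of {L \<in> \<tau>. L \<subseteq> U} U"
      using tiling_of_restrict[OF \<tau> sep] UT by (simp add: Int_absorb1)
    moreover have "\<tau> = {L \<in> \<tau>. L \<subseteq> - U} \<union> {L \<in> \<tau>. L \<subseteq> U}" using sep by blast
    ultimately show ?thesis by blast
  qed
  have "tileable T" if "tiling_of \<sigma>' (T - U)" for \<sigma>'
  proof -
    have "tiling_of (\<sigma>' \<union> \<sigma>) ((T - U) \<union> U)" using tiling_of_Un[OF that \<sigma>] by blast
    then show ?thesis using UT tileable_iff_tiling by (metis Diff_partition Un_commute)
  qed
  with split have "tileable T \<longleftrightarrow> tileable (T - U)" by (meson tileable_iff_tiling)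
  with split show ?thesis unfolding U_def by blast
qed

end
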